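(* Let $H_1,\dots,H_n$ be null hypotheses with $p$-values $PV_1,\dots,PV_n\in[0,1]$ that may have an arbitrary joint dependence structure. Let $I\subseteq\{1,\dots,n\}$ be the set of true null hypotheses, and for each $i$ let $F_i$ be the null distribution function of $PV_i$ (so that $P(PV_j\le x)=F_j(x)$ for $j\in I$), satisfying $F_i(u)\le u$ for all $u\in(0,1)$. Let $G(x)=\sum_{i=1}^n F_i(x)$ for $x\in[0,1]$. Then for every sequence of critical values $0\le c_1\le c_2\le\cdots\le c_n\le 1$, setting $c_0=0$, the step-up procedure with critical values $c$ satisfies $$\mathrm{FDR}(c)\le \sum_{r=1}^n\sum_{j\in I}\frac{1}{r}\bigl(F_j(c_r)-F_j(c_{r-1})\bigr)\le \sum_{r=1}^n\frac{1}{r}\bigl(G(c_r)-G(c_{r-1})\bigr).$$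
   Context: Step-up procedure with critical values $c_1\le\cdots\le c_n$: let $PV_{(1)}\le\cdots\le PV_{(n)}$ be the ordered $p$-values with corresponding hypotheses $H_{(1)},\dots,H_{(n)}$; let $k=\max\{i: PV_{(i)}\le c_i\}$ and reject $H_{(1)},\dots,H_{(k)}$; if no such $i$ exists, reject nothing. With $R$ the number of rejections and $V$ the number of rejected true null hypotheses, $\mathrm{FDR}(c)=E[V/\max(R,1)]$. *)

theory Defs
  imports "HOL-Probability.Probability"
begin

text \<open>Hypotheses are indexed by 1..n; PV i w is the p-value of H_i at outcome w.\<close>

definition ordered_pv :: "(nat \<Rightarrow> 'a \<Rightarrow> real) \<Rightarrow> nat \<Rightarrow> 'a \<Rightarrow> nat \<Rightarrow> real" where
  "ordered_pv PV n w i = sort (map (\<lambda>j. PV j w) [1..<Suc n]) ! (i - 1)"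

text \<open>k = max{i : PV_(i) <= c_i}, and 0 if no such i; this is also R, the number of rejections.\<close>
definition stepup_k :: "(nat \<Rightarrow> 'a \<Rightarrow> real) \<Rightarrow> nat \<Rightarrow> (nat \<Rightarrow> real) \<Rightarrow> 'a \<Rightarrow> nat" where
  "stepup_k PV n c w =
     (if \<exists>i\<in>{1..n}. ordered_pv PV n w i \<le> c i
      then Max {i\<in>{1..n}. ordered_pv PV n w i \<le> c i} else 0)"

definition stepup_rejected :: "(nat \<Rightarrow> 'a \<Rightarrow> real) \<Rightarrow> nat \<Rightarrow> (nat \<Rightarrow> real) \<Rightarrow> 'a \<Rightarrow> nat set" where
  "stepup_rejected PV n c w =
     (let k = stepup_k PV n c w in
      if k = 0 then {} else {i\<in>{1..n}. PV i w \<le> ordered_pv PV n w k})"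

definition stepup_R :: "(nat \<Rightarrow> 'a \<Rightarrow> real) \<Rightarrow> nat \<Rightarrow> (nat \<Rightarrow> real) \<Rightarrow> 'a \<Rightarrow> nat" where
  "stepup_R PV n c w = card (stepup_rejected PV n c w)"

definition stepup_V :: "(nat \<Rightarrow> 'a \<Rightarrow> real) \<Rightarrow> nat \<Rightarrow> (nat \<Rightarrow> real) \<Rightarrow> nat set \<Rightarrow> 'a \<Rightarrow> nat" where
  "stepup_V PV n c I w = card (stepup_rejected PV n c w \<inter> I)"

definition FDR :: "'a measure \<Rightarrow> (nat \<Rightarrow> 'a \<Rightarrow> real) \<Rightarrow> nat \<Rightarrow> (nat \<Rightarrow> real) \<Rightarrow> nat set \<Rightarrow> real" where
  "FDR M PV n c I =
     (\<integral>w. real (stepup_V PV n c I w) / max (real (stepup_R PV n c w)) 1 \<partial>M)"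

end

theory Submission imports Defs begin

text \<open>If a true null \<open>H j\<close> is rejected and \<open>k\<close> is the step-up index, then \<open>R \<ge> k\<close> and
  \<open>PV j \<le> c k\<close>. Hence its share \<open>1 / R\<close> of the false discovery proportion is at most
  \<open>1 / s\<close> for the first \<open>s\<close> with \<open>PV j \<le> c s\<close>, which is the value at \<open>PV j\<close> of the
  telescoping weight \<open>\<Sum>r. (1[x \<le> c r] - 1[x \<le> c (r - 1)]) / r\<close>. The expectation of this
  weight involves only the marginal law \<open>F j\<close>, so the bound holds under arbitrary
  dependence. The second inequality adds the nonnegative increments of the false nulls.\<close>

lemma length_filter_le_sort_nth:
  fixes xs :: "'b::linorder list"
  assumes "k < length xs"
  shows "Suc k \<le> length (filter (\<lambda>v. v \<le> sort xs ! k) xs)"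
proof -
  let ?ys = "sort xs"
  have "length (filter (\<lambda>v. v \<le> ?ys ! k) xs) = length (filter (\<lambda>v. v \<le> ?ys ! k) ?ys)"
    by (metis mset_filter mset_sort size_mset)
  also have "\<dots> = card {i. i < length ?ys \<and> ?ys ! i \<le> ?ys ! k}"
    by (rule length_filter_conv_card)
  also have "{..k} \<subseteq> {i. i < length ?ys \<and> ?ys ! i \<le> ?ys ! k}"
    using assms by (auto intro: sorted_nth_mono)
  then have "card {..k} \<le> card {i. i < length ?ys \<and> ?ys ! i \<le> ?ys ! k}"
    by (intro card_mono) auto
  finally show ?thesis by simp
qed

lemma card_le_ordered_pv:
  assumes "k \<in> {1..n}"
  shows "k \<le> card {i\<in>{1..n}. PV i w \<le> ordered_pv PV n w k}"
proof -
  let ?xs = "map (\<lambda>j. PV j w) [1..<Suc n]"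
  define t where "t = sort ?xs ! (k - 1)"
  have "ordered_pv PV n w k = t" unfolding ordered_pv_def t_def ..
  then have "card {i\<in>{1..n}. PV i w \<le> ordered_pv PV n w k}
      = length (filter (\<lambda>j. PV j w \<le> t) [1..<Suc n])"
    by (subst distinct_length_filter) (auto intro: arg_cong[where f = card])
  also have "\<dots> = length (filter (\<lambda>v. v \<le> t) ?xs)"
    by (simp only: filter_map length_map comp_def)
  moreover have "Suc (k - 1) \<le> length (filter (\<lambda>v. v \<le> t) ?xs)"
    unfolding t_def using assms by (intro length_filter_le_sort_nth) auto
  ultimately show ?thesis
    using assms by (simp del: upt_Suc)
qed

lemma stepup_k_nonzero:
  assumes "stepup_k PV n c w \<noteq> 0"
  shows "stepup_k PV n c w \<in> {1..n}"
    and "ordered_pv PV n w (stepup_k PV n c w) \<le> c (stepup_k PV n c w)"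
proof -
  let ?K = "{i\<in>{1..n}. ordered_pv PV n w i \<le> c i}"
  have "?K \<noteq> {}" and k: "stepup_k PV n c w = Max ?K"
    using assms by (auto simp: stepup_k_def split: if_splits)
  then have "stepup_k PV n c w \<in> ?K" unfolding k by (intro Max_in) auto
  then show "stepup_k PV n c w \<in> {1..n}"
    and "ordered_pv PV n w (stepup_k PV n c w) \<le> c (stepup_k PV n c w)" by auto
qed

lemma stepup_rejected_le_crit:
  assumes "j \<in> stepup_rejected PV n c w"
  obtains k where "k \<in> {1..n}" "k \<le> stepup_R PV n c w" "PV j w \<le> c k"
proof -
  let ?k = "stepup_k PV n c w"
  have k0: "?k \<noteq> 0"
    and rej: "stepup_rejected PV n c w = {i\<in>{1..n}. PV i w \<le> ordered_pv PV n w ?k}"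
    using assms by (auto simp: stepup_rejected_def Let_def split: if_splits)
  have k: "?k \<in> {1..n}" "ordered_pv PV n w ?k \<le> c ?k"
    using stepup_k_nonzero[OF k0] by auto
  show ?thesis
  proof (rule that)
    show "?k \<in> {1..n}" by (fact k(1))
    show "?k \<le> stepup_R PV n c w"
      unfolding stepup_R_def rej using k(1) by (rule card_le_ordered_pv)
    show "PV j w \<le> c ?k"
      using assms rej k(2) by auto
  qed
qed

definition stepup_weight :: "(nat \<Rightarrow> real) \<Rightarrow> nat \<Rightarrow> real \<Rightarrow> real" where
  "stepup_weight c n x = (\<Sum>s=1..n. (1 / real s) * (of_bool (x \<le> c s) - of_bool (x \<le> c (s - 1))))"

lemma stepup_weight_term_nonneg:
  fixes c :: "nat \<Rightarrow> real"
  assumes "c (s - 1) \<le> c s"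
  shows "0 \<le> (1 / real s) * (of_bool (x \<le> c s) - of_bool (x \<le> c (s - 1)))"
proof -
  have "of_bool (x \<le> c (s - 1)) \<le> (of_bool (x \<le> c s) :: real)"
    using assms by simp
  then show ?thesis by simp
qed

lemma stepup_weight_nonneg:
  assumes "\<And>s. s \<in> {1..n} \<Longrightarrow> c (s - 1) \<le> c s"
  shows "0 \<le> stepup_weight c n x"
  unfolding stepup_weight_def by (intro sum_nonneg stepup_weight_term_nonneg assms)

lemma inverse_le_stepup_weight:
  assumes c_mono: "\<And>s. s \<in> {1..n} \<Longrightarrow> c (s - 1) \<le> c s"
    and "k \<in> {1..n}" "c 0 < x" "x \<le> c k"
  shows "1 / real k \<le> stepup_weight c n x"
proof -
  define s0 where "s0 = (LEAST s. x \<le> c s)"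
  have "s0 \<le> k" unfolding s0_def using \<open>x \<le> c k\<close> by (rule Least_le)
  have "x \<le> c s0" unfolding s0_def using \<open>x \<le> c k\<close> by (rule LeastI)
  have "s0 \<noteq> 0" using \<open>x \<le> c s0\<close> \<open>c 0 < x\<close> by (metis not_le)
  have "\<not> x \<le> c (s0 - 1)"
    using \<open>s0 \<noteq> 0\<close> unfolding s0_def by (intro not_less_Least) simp
  have "s0 \<in> {1..n}" using \<open>s0 \<le> k\<close> \<open>s0 \<noteq> 0\<close> assms(2) by simp
  have "1 / real k \<le> 1 / real s0" using \<open>s0 \<le> k\<close> \<open>s0 \<noteq> 0\<close> by (simp add: frac_le)
  also have "\<dots> = (1 / real s0) * (of_bool (x \<le> c s0) - of_bool (x \<le> c (s0 - 1)))"
    using \<open>x \<le> c s0\<close> \<open>\<not> x \<le> c (s0 - 1)\<close> by simp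
  also have "\<dots> \<le> stepup_weight c n x"
    unfolding stepup_weight_def using \<open>s0 \<in> {1..n}\<close>
    by (intro member_le_sum stepup_weight_term_nonneg c_mono) auto
  finally show ?thesis .
qed

text \<open>The summand \<open>of_bool (PV j w \<le> 0)\<close> covers p-values equal to \<open>c 0 = 0\<close>, which the
  weight ignores; it costs nothing in expectation because \<open>F j 0 = 0\<close>.\<close>
lemma stepup_fdp_le_weights:
  assumes "finite I" and "c 0 = 0" and c_mono: "\<And>s. s \<in> {1..n} \<Longrightarrow> c (s - 1) \<le> c s"
  shows "real (stepup_V PV n c I w) / max (real (stepup_R PV n c w)) 1
           \<le> (\<Sum>j\<in>I. stepup_weight c n (PV j w) + of_bool (PV j w \<le> 0))"
proof -
  let ?Rej = "stepup_rejected PV n c w" and ?m = "max (real (stepup_R PV n c w)) 1"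
  have "(\<Sum>j\<in>I. of_bool (j \<in> ?Rej) * (1 / ?m)) = (\<Sum>j\<in>I \<inter> ?Rej. 1 / ?m)"
    using \<open>finite I\<close> by (simp only: sum_of_bool_mult_eq Collect_mem_eq)
  then have "real (stepup_V PV n c I w) / ?m = (\<Sum>j\<in>I. of_bool (j \<in> ?Rej) * (1 / ?m))"
    by (simp add: stepup_V_def Int_commute)
  also have "\<dots> \<le> (\<Sum>j\<in>I. stepup_weight c n (PV j w) + of_bool (PV j w \<le> 0))"
  proof (rule sum_mono)
    fix j
    have weight: "0 \<le> stepup_weight c n (PV j w)" using c_mono by (rule stepup_weight_nonneg)
    show "of_bool (j \<in> ?Rej) * (1 / ?m) \<le> stepup_weight c n (PV j w) + of_bool (PV j w \<le> 0)"
    proof (cases "j \<in> ?Rej")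
      case True
      then obtain k where k: "k \<in> {1..n}" "k \<le> stepup_R PV n c w" "PV j w \<le> c k"
        by (rule stepup_rejected_le_crit)
      show ?thesis
      proof (cases "PV j w \<le> 0")
        case True
        have "1 / ?m \<le> 1" by simp
        then have "1 / ?m \<le> stepup_weight c n (PV j w) + 1" using weight by linarith
        then show ?thesis using \<open>PV j w \<le> 0\<close> \<open>j \<in> ?Rej\<close> by simp
      next
        case False
        have "1 / ?m \<le> 1 / real k" using k by (simp add: frac_le)
        also have "\<dots> \<le> stepup_weight c n (PV j w)"
          using k False \<open>c 0 = 0\<close> by (intro inverse_le_stepup_weight c_mono) auto
        finally show ?thesis using \<open>j \<in> ?Rej\<close> by simp
      qed
    qed (use weight in simp)
  qed
  finally show ?thesis .
qed

lemma mono_le_id_imp_zero: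
  fixes F :: "real \<Rightarrow> real"
  assumes "mono F" "\<forall>u\<in>{0<..<1}. F u \<le> u" "0 \<le> F 0"
  shows "F 0 = 0"
proof (rule ccontr)
  assume "F 0 \<noteq> 0"
  define u where "u = min (F 0 / 2) (1 / 2)"
  have "u \<in> {0<..<1}" using \<open>F 0 \<noteq> 0\<close> assms(3) by (auto simp: u_def)
  then have "F 0 \<le> u" using assms(1,2) monoD[of F 0 u] by fastforce
  then show False using \<open>F 0 \<noteq> 0\<close> assms(3) by (auto simp: u_def)
qed

context prob_space
begin

lemma integrable_of_bool_le:
  fixes X :: "'a \<Rightarrow> real"
  assumes "X \<in> borel_measurable M"
  shows "integrable M (\<lambda>w. of_bool (X w \<le> t) :: real)"
    and "(\<integral>w. of_bool (X w \<le> t) \<partial>M) = prob {w\<in>space M. X w \<le> t}"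
proof -
  let ?S = "{w\<in>space M. X w \<le> t}"
  have "?S \<in> events"
    using assms by (simp add: borel_measurable_iff_le)
  have eq: "of_bool (X w \<le> t) = (indicator ?S w :: real)" if "w \<in> space M" for w
    using that by (simp add: indicator_def)
  show "integrable M (\<lambda>w. of_bool (X w \<le> t) :: real)"
    using \<open>?S \<in> events\<close> by (subst Bochner_Integration.integrable_cong[OF refl eq])
      (auto simp: integrable_indicator_iff less_top[symmetric])
  show "(\<integral>w. of_bool (X w \<le> t) \<partial>M) = prob ?S"
    using \<open>?S \<in> events\<close> by (subst Bochner_Integration.integral_cong[OF refl eq]) auto
qed

lemma integral_stepup_weight:
  fixes X :: "'a \<Rightarrow> real"
  assumes "X \<in> borel_measurable M" and cdf: "\<And>x. prob {w\<in>space M. X w \<le> x} = F x"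
  shows "integrable M (\<lambda>w. stepup_weight c n (X w))"
    and "(\<integral>w. stepup_weight c n (X w) \<partial>M) = (\<Sum>s=1..n. (1 / real s) * (F (c s) - F (c (s - 1))))"
  using integrable_of_bool_le[OF assms(1)]
  by (auto simp: stepup_weight_def cdf integral_sum integral_diff)

lemma integral_stepup_weight_null:
  fixes X :: "'a \<Rightarrow> real" and F :: "real \<Rightarrow> real"
  assumes "X \<in> borel_measurable M" and cdf: "\<And>x. prob {w\<in>space M. X w \<le> x} = F x"
    and "mono F" "\<forall>u\<in>{0<..<1}. F u \<le> u"
  shows "integrable M (\<lambda>w. stepup_weight c n (X w) + of_bool (X w \<le> 0))"
    and "(\<integral>w. stepup_weight c n (X w) + of_bool (X w \<le> 0) \<partial>M)
           = (\<Sum>s=1..n. (1 / real s) * (F (c s) - F (c (s - 1))))"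
proof -
  have "F 0 = 0"
    using assms(3,4) by (rule mono_le_id_imp_zero) (metis cdf measure_nonneg)
  then show "integrable M (\<lambda>w. stepup_weight c n (X w) + of_bool (X w \<le> 0))"
    and "(\<integral>w. stepup_weight c n (X w) + of_bool (X w \<le> 0) \<partial>M)
           = (\<Sum>s=1..n. (1 / real s) * (F (c s) - F (c (s - 1))))"
    using integral_stepup_weight[OF assms(1) cdf] integrable_of_bool_le[OF assms(1)]
    by (simp_all add: cdf)
qed

lemma FDR_le_sum_integral_stepup_weight:
  assumes "finite I" and "c 0 = 0" and c_mono: "\<And>s. s \<in> {1..n} \<Longrightarrow> c (s - 1) \<le> c s"
    and int: "\<And>j. j \<in> I \<Longrightarrow> integrable M (\<lambda>w. stepup_weight c n (PV j w) + of_bool (PV j w \<le> 0))"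
  shows "FDR M PV n c I \<le> (\<Sum>j\<in>I. \<integral>w. stepup_weight c n (PV j w) + of_bool (PV j w \<le> 0) \<partial>M)"
proof -
  have "FDR M PV n c I \<le> (\<integral>w. (\<Sum>j\<in>I. stepup_weight c n (PV j w) + of_bool (PV j w \<le> 0)) \<partial>M)"
    unfolding FDR_def
  proof (rule integral_mono')
    show "integrable M (\<lambda>w. \<Sum>j\<in>I. stepup_weight c n (PV j w) + of_bool (PV j w \<le> 0))"
      using int by auto
    show "real (stepup_V PV n c I w) / max (real (stepup_R PV n c w)) 1
        \<le> (\<Sum>j\<in>I. stepup_weight c n (PV j w) + of_bool (PV j w \<le> 0))" for w
      using assms(1,2) c_mono by (rule stepup_fdp_le_weights)
    show "0 \<le> (\<Sum>j\<in>I. stepup_weight c n (PV j w) + of_bool (PV j w \<le> 0))" for w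
      using c_mono by (intro sum_nonneg add_nonneg_nonneg stepup_weight_nonneg) auto
  qed
  also have "\<dots> = (\<Sum>j\<in>I. \<integral>w. stepup_weight c n (PV j w) + of_bool (PV j w \<le> 0) \<partial>M)"
    using int by (rule Bochner_Integration.integral_sum)
  finally show ?thesis .
qed

end

lemma weighted_increments_subset_le:
  fixes F :: "nat \<Rightarrow> real \<Rightarrow> real"
  assumes "I \<subseteq> {1..n}" "\<forall>i\<in>{1..n}. mono (F i)" "\<And>s. s \<in> {1..n} \<Longrightarrow> c (s - 1) \<le> c s"
  shows "(\<Sum>r=1..n. \<Sum>j\<in>I. (1 / real r) * (F j (c r) - F j (c (r - 1))))
       \<le> (\<Sum>r=1..n. (1 / real r) * ((\<Sum>i=1..n. F i (c r)) - (\<Sum>i=1..n. F i (c (r - 1)))))"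
proof (rule sum_mono)
  fix r assume "r \<in> {1..n}"
  have "(\<Sum>j\<in>I. (1 / real r) * (F j (c r) - F j (c (r - 1))))
      = (1 / real r) * (\<Sum>j\<in>I. F j (c r) - F j (c (r - 1)))"
    by (simp add: sum_distrib_left)
  also have "\<dots> \<le> (1 / real r) * (\<Sum>j\<in>{1..n}. F j (c r) - F j (c (r - 1)))"
    using assms \<open>r \<in> {1..n}\<close> by (intro mult_left_mono sum_mono2) (auto simp: mono_def)
  also have "\<dots> = (1 / real r) * ((\<Sum>i=1..n. F i (c r)) - (\<Sum>i=1..n. F i (c (r - 1))))"
    by (simp add: sum_subtractf)
  finally show "(\<Sum>j\<in>I. (1 / real r) * (F j (c r) - F j (c (r - 1))))
      \<le> (1 / real r) * ((\<Sum>i=1..n. F i (c r)) - (\<Sum>i=1..n. F i (c (r - 1))))" .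
qed

theorem proposition1:
  fixes M :: "'a measure" and PV :: "nat \<Rightarrow> 'a \<Rightarrow> real" and n :: nat
    and I :: "nat set" and F :: "nat \<Rightarrow> real \<Rightarrow> real" and c :: "nat \<Rightarrow> real"
  assumes "prob_space M"
    and "\<forall>i\<in>{1..n}. PV i \<in> borel_measurable M"
    and "\<forall>i\<in>{1..n}. \<forall>w\<in>space M. 0 \<le> PV i w \<and> PV i w \<le> 1"
    and "I \<subseteq> {1..n}"
    and "\<forall>j\<in>I. \<forall>x. measure M {w\<in>space M. PV j w \<le> x} = F j x"
    and "\<forall>i\<in>{1..n}. mono (F i)"
    and "\<forall>i\<in>{1..n}. \<forall>u\<in>{0<..<1}. F i u \<le> u"
    and "c 0 = 0"
    and "\<forall>i\<in>{1..n}. 0 \<le> c i \<and> c i \<le> 1"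
    and "\<forall>i j. 1 \<le> i \<and> i \<le> j \<and> j \<le> n \<longrightarrow> c i \<le> c j"
  shows "FDR M PV n c I
           \<le> (\<Sum>r=1..n. \<Sum>j\<in>I. (1 / real r) * (F j (c r) - F j (c (r - 1))))
       \<and> (\<Sum>r=1..n. \<Sum>j\<in>I. (1 / real r) * (F j (c r) - F j (c (r - 1))))
           \<le> (\<Sum>r=1..n. (1 / real r) *
                 ((\<Sum>i=1..n. F i (c r)) - (\<Sum>i=1..n. F i (c (r - 1)))))"
proof -
  interpret prob_space M by fact
  have c_mono: "c (s - 1) \<le> c s" if "s \<in> {1..n}" for s
    using that assms(8-10) by (cases "s = 1") auto
  have null: "integrable M (\<lambda>w. stepup_weight c n (PV j w) + of_bool (PV j w \<le> 0))"
    "(\<integral>w. stepup_weight c n (PV j w) + of_bool (PV j w \<le> 0) \<partial>M)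
       = (\<Sum>r=1..n. (1 / real r) * (F j (c r) - F j (c (r - 1))))" if "j \<in> I" for j
  proof -
    have "j \<in> {1..n}" using that assms(4) by auto
    then show "integrable M (\<lambda>w. stepup_weight c n (PV j w) + of_bool (PV j w \<le> 0))"
      "(\<integral>w. stepup_weight c n (PV j w) + of_bool (PV j w \<le> 0) \<partial>M)
         = (\<Sum>r=1..n. (1 / real r) * (F j (c r) - F j (c (r - 1))))"
      using integral_stepup_weight_null[of "PV j" "F j"] that assms(2,5-7) by auto
  qed
  have "FDR M PV n c I
      \<le> (\<Sum>j\<in>I. \<integral>w. stepup_weight c n (PV j w) + of_bool (PV j w \<le> 0) \<partial>M)"
    using finite_subset[OF assms(4)] assms(8) c_mono null(1)
    by (rule FDR_le_sum_integral_stepup_weight) auto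
  also have "\<dots> = (\<Sum>r=1..n. \<Sum>j\<in>I. (1 / real r) * (F j (c r) - F j (c (r - 1))))"
    using null(2) by (simp add: sum.swap[of _ I])
  finally show ?thesis
    using weighted_increments_subset_le[where c = c, OF assms(4,6) c_mono] by blast
qed

end
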